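(* Let $X$ be a unital commutative semiring which is idempotent, linearly ordered by its intrinsic order, and such that for all $a,b,x\in X$ with $a<b$ one has $ax=0$ or $ax<bx$. The following are equivalent: (1) $\tilde{\mathcal{S}}(X)$ is fully elementary; (2) $\tilde{\mathcal{S}}(X)$ is Frobenius; (3) $X=\{0\}$.
   Context: A semiring $(X,+,0,\cdot)$: $(X,+,0)$ commutative monoid, $(X,\cdot)$ semigroup, distributivity, $0$ absorbing. Idempotent: $x+x=x$. Intrinsic order: $a\le b$ iff $a+x=b$ for some $x$; $a<b$ means $a\le b$, $a\ne b$. $\mathcal{S}(X)=X\times X$ with $(a',a'')+(b',b'')=(a'+b',a''+b'')$, $(a',a'')(b',b'')=(a'b'+a''b'',a'b''+a''b')$. Relation: $(a',a'')\sim(b',b'')$ iff $(a',a'')=(b',b'')$ or ($a'\ne a''$, $b'\ne b''$, $a'+b''=a''+b'$). Under the hypotheses $\sim$ is a congruence and $\tilde{\mathcal{S}}(X)=\mathcal{S}(X)/\sim$ is a unital commutative semiring. A unital commutative semiring $Y$ is Frobenius if $(x+y)^n=x^n+y^n$ for all $x,y\in Y$, $n\ge1$; polynomials over $Y$ are functions represented by formal expressions $\sum_k a_k\prod_j x_j^{d_{k,j}}$; symmetric if represented by an expression closed (with coefficients) under permuting variables; $e_j$ is the sum of all products of $j$ distinct variables; $Y$ is fully elementary if for every $n$ every symmetric polynomial in $n$ variables equals $r(e_1,\dots,e_n)$ on $Y^n$ for some polynomial $r$. *)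

theory Defs
  imports Main "HOL-Combinatorics.Permutations"
begin

text \<open>X is a type of sort {comm_semiring_0, comm_monoid_mult}: a unital commutative
semiring with absorbing 0, WITHOUT the axiom 0 \<noteq> 1 (so X = {0} is allowed).\<close>

definition intrinsic_le :: "'a::comm_monoid_add \<Rightarrow> 'a \<Rightarrow> bool" where
  "intrinsic_le a b \<longleftrightarrow> (\<exists>x. a + x = b)"

definition intrinsic_less :: "'a::comm_monoid_add \<Rightarrow> 'a \<Rightarrow> bool" where
  "intrinsic_less a b \<longleftrightarrow> intrinsic_le a b \<and> a \<noteq> b"

definition idempotent_sr :: "'a::comm_monoid_add itself \<Rightarrow> bool" where
  "idempotent_sr _ \<longleftrightarrow> (\<forall>x::'a. x + x = x)"

definition intrinsic_linear :: "'a::comm_monoid_add itself \<Rightarrow> bool" where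
  "intrinsic_linear _ \<longleftrightarrow> (\<forall>a b::'a. intrinsic_le a b \<or> intrinsic_le b a)"

definition sadd :: "'a::comm_semiring_0 \<times> 'a \<Rightarrow> 'a \<times> 'a \<Rightarrow> 'a \<times> 'a" where
  "sadd p q = (fst p + fst q, snd p + snd q)"

definition smul :: "'a::comm_semiring_0 \<times> 'a \<Rightarrow> 'a \<times> 'a \<Rightarrow> 'a \<times> 'a" where
  "smul p q = (fst p * fst q + snd p * snd q, fst p * snd q + snd p * fst q)"

definition szero :: "'a::comm_semiring_0 \<times> 'a" where
  "szero = (0, 0)"

definition sone :: "'a::{comm_semiring_0, comm_monoid_mult} \<times> 'a" where
  "sone = (1, 0)"

definition ssim :: "'a::comm_semiring_0 \<times> 'a \<Rightarrow> 'a \<times> 'a \<Rightarrow> bool" where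
  "ssim p q \<longleftrightarrow> p = q \<or> (fst p \<noteq> snd p \<and> fst q \<noteq> snd q \<and> fst p + snd q = snd p + fst q)"

definition simrel :: "('a::comm_semiring_0 \<times> 'a) rel" where
  "simrel = {(p, q). ssim p q}"

text \<open>The quotient S~(X) = S(X)/\<sim>, as a set of equivalence classes with induced operations
(well defined because \<sim> is a congruence under the standing hypotheses).\<close>

definition Scls :: "'a::comm_semiring_0 \<times> 'a \<Rightarrow> ('a \<times> 'a) set" where
  "Scls p = simrel `` {p}"

definition Stilde :: "('a::comm_semiring_0 \<times> 'a) set set" where
  "Stilde = UNIV // simrel"

definition qadd :: "('a::comm_semiring_0 \<times> 'a) set \<Rightarrow> ('a \<times> 'a) set \<Rightarrow> ('a \<times> 'a) set" where
  "qadd A B = Scls (sadd (SOME p. p \<in> A) (SOME q. q \<in> B))"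

definition qmul :: "('a::comm_semiring_0 \<times> 'a) set \<Rightarrow> ('a \<times> 'a) set \<Rightarrow> ('a \<times> 'a) set" where
  "qmul A B = Scls (smul (SOME p. p \<in> A) (SOME q. q \<in> B))"

definition qzero :: "('a::comm_semiring_0 \<times> 'a) set" where
  "qzero = Scls szero"

definition qone :: "('a::{comm_semiring_0, comm_monoid_mult} \<times> 'a) set" where
  "qone = Scls sone"

fun gpow :: "('b \<Rightarrow> 'b \<Rightarrow> 'b) \<Rightarrow> 'b \<Rightarrow> 'b \<Rightarrow> nat \<Rightarrow> 'b" where
  "gpow mul one x 0 = one"
| "gpow mul one x (Suc n) = mul x (gpow mul one x n)"

definition frobenius ::
  "'b set \<Rightarrow> ('b \<Rightarrow> 'b \<Rightarrow> 'b) \<Rightarrow> ('b \<Rightarrow> 'b \<Rightarrow> 'b) \<Rightarrow> 'b \<Rightarrow> bool" where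
  "frobenius Y add mul one \<longleftrightarrow>
     (\<forall>x\<in>Y. \<forall>y\<in>Y. \<forall>n\<ge>1. gpow mul one (add x y) n = add (gpow mul one x n) (gpow mul one y n))"

text \<open>Formal polynomial expressions in n variables x_0..x_(n-1):
  a list of terms (a_k, d_k), standing for \<Sum>_k a_k \<Prod>_(j<n) x_j^(d_k j).\<close>

type_synonym 'b pexpr = "('b \<times> (nat \<Rightarrow> nat)) list"

definition mon_eval ::
  "('b \<Rightarrow> 'b \<Rightarrow> 'b) \<Rightarrow> 'b \<Rightarrow> nat \<Rightarrow> (nat \<Rightarrow> nat) \<Rightarrow> (nat \<Rightarrow> 'b) \<Rightarrow> 'b" where
  "mon_eval mul one n d xs = foldr (\<lambda>j acc. mul (gpow mul one (xs j) (d j)) acc) [0..<n] one"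

definition peval ::
  "('b \<Rightarrow> 'b \<Rightarrow> 'b) \<Rightarrow> 'b \<Rightarrow> ('b \<Rightarrow> 'b \<Rightarrow> 'b) \<Rightarrow> 'b \<Rightarrow> nat \<Rightarrow> 'b pexpr \<Rightarrow> (nat \<Rightarrow> 'b) \<Rightarrow> 'b" where
  "peval add zero mul one n p xs =
     foldr (\<lambda>(c, d) acc. add (mul c (mon_eval mul one n d xs)) acc) p zero"

definition valid_pexpr :: "'b set \<Rightarrow> nat \<Rightarrow> 'b pexpr \<Rightarrow> bool" where
  "valid_pexpr Y n p \<longleftrightarrow> (\<forall>(c, d) \<in> set p. c \<in> Y \<and> (\<forall>j\<ge>n. d j = 0))"

text \<open>An expression is symmetric if (as a formal sum, i.e. a multiset of terms, coefficients
included) it is unchanged by every permutation of the variables.\<close>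

definition symmetric_pexpr :: "'b set \<Rightarrow> nat \<Rightarrow> 'b pexpr \<Rightarrow> bool" where
  "symmetric_pexpr Y n p \<longleftrightarrow> valid_pexpr Y n p \<and>
     (\<forall>\<sigma>. \<sigma> permutes {..<n} \<longrightarrow> mset (map (\<lambda>(c, d). (c, d \<circ> \<sigma>)) p) = mset p)"

definition symmetric_poly ::
  "'b set \<Rightarrow> ('b \<Rightarrow> 'b \<Rightarrow> 'b) \<Rightarrow> 'b \<Rightarrow> ('b \<Rightarrow> 'b \<Rightarrow> 'b) \<Rightarrow> 'b \<Rightarrow> nat \<Rightarrow> ((nat \<Rightarrow> 'b) \<Rightarrow> 'b) \<Rightarrow> bool" where
  "symmetric_poly Y add zero mul one n f \<longleftrightarrow>
     (\<exists>p. symmetric_pexpr Y n p \<and>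
          (\<forall>xs. (\<forall>i<n. xs i \<in> Y) \<longrightarrow> f xs = peval add zero mul one n p xs))"

definition elem_pexpr :: "'b \<Rightarrow> nat \<Rightarrow> nat \<Rightarrow> 'b pexpr" where
  "elem_pexpr one n j =
     map (\<lambda>l. (one, \<lambda>i. if i \<in> set l then 1 else 0)) (filter (\<lambda>l. length l = j) (subseqs [0..<n]))"

definition fully_elementary ::
  "'b set \<Rightarrow> ('b \<Rightarrow> 'b \<Rightarrow> 'b) \<Rightarrow> 'b \<Rightarrow> ('b \<Rightarrow> 'b \<Rightarrow> 'b) \<Rightarrow> 'b \<Rightarrow> bool" where
  "fully_elementary Y add zero mul one \<longleftrightarrow>
     (\<forall>n f. symmetric_poly Y add zero mul one n f \<longrightarrow>
        (\<exists>r. valid_pexpr Y n r \<and>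
             (\<forall>xs. (\<forall>i<n. xs i \<in> Y) \<longrightarrow>
                f xs = peval add zero mul one n r
                         (\<lambda>i. peval add zero mul one n (elem_pexpr one n (Suc i)) xs))))"

end

theory Submission
  imports Defs
begin

text \<open>Under the hypotheses the sum on X is the maximum of a linear order, and the class of a
pair (a, b) under \<sim> is determined by its magnitude a + b and its sign (positive if b < a, negative
if a < b, balanced if a = b); magnitude and sign of a sum or product of pairs depend only on those
of the operands. So when X \<noteq> {0}, writing P, N, B for the classes of (1,0), (0,1), (1,1):

  - Frobenius fails, since (P + N)^2 = B^2 = B but P^2 + N^2 = P.
  - x0^2 + x1^2 is not r(e1, e2): at the point (N, 0) its value has magnitude 1, so some summand
    c e1^k e2^l of r has magnitude 1 there, forcing l = 0 and magnitude 1 for c; at (0, 0) every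
    summand vanishes, forcing k > 0. At (P, N) the value P is positive of magnitude 1, so no
    summand of magnitude 1 is balanced; but there e1 = B, so c e1^k is balanced.

When X = {0} the quotient is a single point and both properties hold trivially.\<close>

subsection \<open>Evaluating formal expressions\<close>

lemma gpow_hom:
  assumes "\<And>x y. h (mul x y) = mul' (h x) (h y)" and "h one = one'"
  shows "h (gpow mul one x n) = gpow mul' one' (h x) n"
  by (induction n) (simp_all add: assms)

lemma mon_eval_hom:
  assumes "\<And>x y. h (mul x y) = mul' (h x) (h y)" and "h one = one'"
  shows "h (mon_eval mul one n d xs) = mon_eval mul' one' n d (h \<circ> xs)"
proof -
  have "h (foldr (\<lambda>j acc. mul (gpow mul one (xs j) (d j)) acc) js one)
      = foldr (\<lambda>j acc. mul' (gpow mul' one' (h (xs j)) (d j)) acc) js one'" for js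
    by (induction js)
      (simp_all add: assms gpow_hom[where h = h and mul = mul and mul' = mul', OF assms])
  then show ?thesis
    unfolding mon_eval_def by simp
qed

lemma mon_eval_two:
  "mon_eval mul one 2 d xs = mul (gpow mul one (xs 0) (d 0)) (mul (gpow mul one (xs 1) (d 1)) one)"
  by (simp add: mon_eval_def numeral_2_eq_2)

lemma peval_Nil [simp]: "peval add zero mul one n [] xs = zero"
  by (simp add: peval_def)

lemma peval_Cons [simp]:
  "peval add zero mul one n ((c, d) # p) xs
     = add (mul c (mon_eval mul one n d xs)) (peval add zero mul one n p xs)"
  by (simp add: peval_def)

lemma peval_hom:
  assumes "\<And>x y. h (add x y) = add' (h x) (h y)" and "\<And>x y. h (mul x y) = mul' (h x) (h y)"
    and "h zero = zero'" and "h one = one'"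
  shows "h (peval add zero mul one n p xs)
       = peval add' zero' mul' one' n (map (\<lambda>(c, d). (h c, d)) p) (h \<circ> xs)"
  by (induction p)
    (auto simp: assms comp_def mon_eval_hom[where h = h and mul = mul and mul' = mul', OF assms(2,4)])

lemma peval_cong:
  assumes "\<And>i. i < n \<Longrightarrow> xs i = ys i"
  shows "peval add zero mul one n p xs = peval add zero mul one n p ys"
proof -
  have "mon_eval mul one n d xs = mon_eval mul one n d ys" for d
    unfolding mon_eval_def by (rule foldr_cong) (simp_all add: assms)
  then show ?thesis
    by (induction p) auto
qed

lemma peval_summands_all:
  assumes "\<And>a b. Q (add a b) \<Longrightarrow> Q a \<and> Q b" and "Q (peval add zero mul one n p xs)"
  shows "\<forall>(c, d) \<in> set p. Q (mul c (mon_eval mul one n d xs))"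
  using assms(2)
proof (induction p)
  case (Cons cd p)
  then show ?case
    by (cases cd) (auto dest: assms(1))
qed simp

lemma peval_summand_ex:
  assumes "\<And>a b. Q (add a b) \<Longrightarrow> Q a \<or> Q b" and "\<not> Q zero"
    and "Q (peval add zero mul one n p xs)"
  shows "\<exists>(c, d) \<in> set p. Q (mul c (mon_eval mul one n d xs))"
  using assms(3)
proof (induction p)
  case (Cons cd p)
  then show ?case
    by (cases cd) (auto dest: assms(1))
qed (simp add: assms(2))

definition power_sum_pexpr :: "'b \<Rightarrow> nat \<Rightarrow> nat \<Rightarrow> 'b pexpr" where
  "power_sum_pexpr c n m = map (\<lambda>k. (c, \<lambda>i. if i = k then m else 0)) [0..<n]"

lemma symmetric_power_sum_pexpr:
  assumes "c \<in> Y"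
  shows "symmetric_pexpr Y n (power_sum_pexpr c n m)"
  unfolding symmetric_pexpr_def
proof (intro conjI allI impI)
  show "valid_pexpr Y n (power_sum_pexpr c n m)"
    using assms by (auto simp: valid_pexpr_def power_sum_pexpr_def)
  fix \<sigma>
  assume \<sigma>: "\<sigma> permutes {..<n}"
  have "\<sigma> i = k \<longleftrightarrow> i = inv \<sigma> k" for i k
    using permutes_inv_eq[OF \<sigma>, of k i] by (simp add: eq_commute)
  then have "(\<lambda>i. if i = k then m else 0) \<circ> \<sigma> = (\<lambda>i. if i = inv \<sigma> k then m else 0)" for k
    by (simp add: fun_eq_iff)
  then have "image_mset (\<lambda>k. (c, \<lambda>i. if i = k then m else 0)) (mset_set {..<n})
      = image_mset (\<lambda>k. (c, (\<lambda>i. if i = k then m else 0) \<circ> \<sigma>)) (mset_set {..<n})"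
    by (intro permutes_implies_image_mset_eq[OF permutes_inv[OF \<sigma>]]) simp
  then show "mset (map (\<lambda>(c, d). (c, d \<circ> \<sigma>)) (power_sum_pexpr c n m)) = mset (power_sum_pexpr c n m)"
    by (simp add: power_sum_pexpr_def mset_map lessThan_atLeast0 comp_def)
qed

lemma map_coeff_power_sum_pexpr:
  "map (\<lambda>(c, d). (h c, d)) (power_sum_pexpr c n m) = power_sum_pexpr (h c) n m"
  by (simp add: power_sum_pexpr_def)

lemma map_coeff_elem_pexpr:
  "map (\<lambda>(c, d). (h c, d)) (elem_pexpr one n j) = elem_pexpr (h one) n j"
  by (simp add: elem_pexpr_def)

subsection \<open>Magnitude and sign of pairs\<close>

lemma sadd_commute: "sadd p q = sadd q (p::'a::comm_semiring_0 \<times> 'a)"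
  by (simp add: sadd_def add.commute)

lemma smul_commute: "smul p q = smul q (p::'a::comm_semiring_0 \<times> 'a)"
  by (simp add: smul_def mult.commute add.commute)

lemma sadd_szero [simp]: "sadd p szero = p"
  by (simp add: sadd_def szero_def)

lemma smul_sone [simp]: "smul p sone = (p::'a::{comm_semiring_0, comm_monoid_mult} \<times> 'a)"
  by (simp add: smul_def sone_def)

lemma sone_smul [simp]: "smul sone p = (p::'a::{comm_semiring_0, comm_monoid_mult} \<times> 'a)"
  by (simp add: smul_def sone_def)

lemma smul_swap_left: "smul (prod.swap p) q = prod.swap (smul p q)"
  by (simp add: smul_def add.commute)

lemma smul_swap_right: "smul p (prod.swap q) = prod.swap (smul p q)"
  by (simp add: smul_def add.commute)

lemma peval_power_sum_two:
  "peval sadd szero smul sone 2 (power_sum_pexpr sone 2 2) xs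
     = sadd (smul (xs 0) (xs 0)) (smul (xs 1) ((xs :: nat \<Rightarrow> 'a::{comm_semiring_0, comm_monoid_mult} \<times> 'a) 1))"
  by (simp add: power_sum_pexpr_def mon_eval_def numeral_2_eq_2 upt_rec)

lemma peval_elem_pexpr_two:
  "peval sadd szero smul sone 2 (elem_pexpr sone 2 (Suc i)) xs
     = (if i = 0 then sadd (xs 0) (xs 1) else if i = 1 then smul (xs 0) (xs 1)
        else (szero :: 'a::{comm_semiring_0, comm_monoid_mult} \<times> 'a))"
  by (cases i; cases "i - 1") (simp_all add: elem_pexpr_def mon_eval_def numeral_2_eq_2 upt_rec)

definition mag :: "'a::comm_monoid_add \<times> 'a \<Rightarrow> 'a" where
  "mag p = fst p + snd p"

datatype sign = Positive | Negative | Balanced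

fun sign_neg :: "sign \<Rightarrow> sign" where
  "sign_neg Positive = Negative"
| "sign_neg Negative = Positive"
| "sign_neg Balanced = Balanced"

fun sign_mult :: "sign \<Rightarrow> sign \<Rightarrow> sign" where
  "sign_mult Balanced s = Balanced"
| "sign_mult s Balanced = Balanced"
| "sign_mult Positive s = s"
| "sign_mult Negative s = sign_neg s"

definition sign_of :: "'a::comm_monoid_add \<times> 'a \<Rightarrow> sign" where
  "sign_of p = (if fst p = snd p then Balanced else if fst p + snd p = fst p then Positive else Negative)"

lemma sign_neg_eq_iff [simp]: "sign_neg s = t \<longleftrightarrow> s = sign_neg t"
  by (cases s; cases t) simp_all

lemma mag_Pair [simp]: "mag (a, b) = a + b"
  by (simp add: mag_def)

lemma mag_sadd [simp]: "mag (sadd p q) = mag p + mag q"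
  by (simp add: mag_def sadd_def algebra_simps)

lemma mag_smul [simp]: "mag (smul p q) = mag p * mag q"
  by (simp add: mag_def smul_def algebra_simps)

lemma mag_szero [simp]: "mag szero = 0"
  by (simp add: szero_def)

lemma mag_sone [simp]: "mag (sone :: 'a::{comm_semiring_0, comm_monoid_mult} \<times> 'a) = 1"
  by (simp add: sone_def)

lemma mag_gpow [simp]: "mag (gpow smul sone p n) = mag p ^ n"
  by (induction n) simp_all

lemma mag_swap [simp]: "mag (prod.swap p) = mag p"
  by (simp add: mag_def add.commute)

lemma sign_of_balanced_smul: "sign_of q = Balanced \<Longrightarrow> sign_of (smul p q) = Balanced"
  by (cases p; cases q) (simp add: sign_of_def smul_def split: if_splits)

lemma sign_of_gpow_Balanced:
  "sign_of p = Balanced \<Longrightarrow> sign_of (gpow smul sone p (Suc k)) = Balanced"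
  by (simp add: smul_commute[of p] sign_of_balanced_smul)

lemma intrinsic_le_mult_right:
  "intrinsic_le (a::'a::comm_semiring_0) b \<Longrightarrow> intrinsic_le (a * c) (b * c)"
  unfolding intrinsic_le_def by (metis distrib_right)

text \<open>The value at (u, v) of g e1^(d 0) e2^(d 1), and the statement x0^2 + x1^2 = r(e1, e2) lifted
to representatives.\<close>

definition elem_monomial ::
  "'a::{comm_semiring_0, comm_monoid_mult} \<times> 'a \<Rightarrow> (nat \<Rightarrow> nat) \<Rightarrow> 'a \<times> 'a \<Rightarrow> 'a \<times> 'a \<Rightarrow> 'a \<times> 'a"
  where "elem_monomial g d u v = smul g (mon_eval smul sone 2 d (\<lambda>i. if i = 0 then sadd u v else smul u v))"

definition expresses_sum_squares :: "('a::{comm_semiring_0, comm_monoid_mult} \<times> 'a) pexpr \<Rightarrow> bool" where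
  "expresses_sum_squares r \<longleftrightarrow> (\<forall>u v. Scls (sadd (smul u u) (smul v v))
     = Scls (peval sadd szero smul sone 2 r (\<lambda>i. if i = 0 then sadd u v else smul u v)))"

lemma mag_elem_monomial:
  "mag (elem_monomial g d u v) = mag g * mag (sadd u v) ^ d 0 * mag (smul u v) ^ d 1"
  by (simp add: elem_monomial_def mon_eval_two mult.assoc)

lemma sign_of_elem_monomial_Balanced:
  assumes "d 0 \<noteq> 0"
  shows "sign_of (elem_monomial (g :: 'a::{comm_semiring_0, comm_monoid_mult} \<times> 'a) d (1, 0) (0, 1))
    = Balanced"
proof -
  let ?B = "gpow smul sone (1, 1) (d 0) :: 'a \<times> 'a"
  obtain k where "d 0 = Suc k"
    using assms not0_implies_Suc by blast
  then have "sign_of ?B = Balanced"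
    by (simp only:) (rule sign_of_gpow_Balanced, simp add: sign_of_def)
  then have "sign_of (smul ?B x) = Balanced" for x
    by (simp add: smul_commute[of ?B] sign_of_balanced_smul)
  moreover have "sadd (1, 0) (0, 1) = ((1, 1) :: 'a \<times> 'a)"
    by (simp add: sadd_def)
  ultimately show ?thesis
    by (simp add: elem_monomial_def mon_eval_two sign_of_balanced_smul)
qed

subsection \<open>The quotient\<close>

lemma Scls_in_Stilde: "Scls p \<in> Stilde"
  unfolding Stilde_def Scls_def by (rule quotientI) simp

lemma Stilde_cases:
  assumes "A \<in> Stilde"
  obtains p where "A = Scls p"
  using assms unfolding Stilde_def Scls_def by (auto elim: quotientE)

lemma Scls_trivial:
  assumes "(UNIV :: 'a::comm_semiring_0 set) = {0}"
  shows "Scls p = Scls (q :: 'a \<times> 'a)"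
proof -
  have "x = 0" for x :: 'a
    using assms by blast
  then show ?thesis
    by (metis prod.collapse)
qed

lemma frobenius_trivial:
  assumes "(UNIV :: 'a::{comm_semiring_0, comm_monoid_mult} set) = {0}"
  shows "frobenius (Stilde :: ('a \<times> 'a) set set) qadd qmul qone"
  unfolding frobenius_def
proof (intro ballI allI impI)
  fix x y :: "('a \<times> 'a) set" and n :: nat
  assume "n \<ge> 1"
  then obtain m where "n = Suc m"
    using not0_implies_Suc by fastforce
  then show "gpow qmul qone (qadd x y) n = qadd (gpow qmul qone x n) (gpow qmul qone y n)"
    using Scls_trivial[OF assms] by (simp add: qadd_def qmul_def)
qed

lemma fully_elementary_trivial:
  assumes "(UNIV :: 'a::{comm_semiring_0, comm_monoid_mult} set) = {0}"
  shows "fully_elementary (Stilde :: ('a \<times> 'a) set set) qadd qzero qmul qone"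
proof -
  have "qadd A B = qzero" for A B :: "('a \<times> 'a) set"
    unfolding qadd_def qzero_def by (rule Scls_trivial[OF assms])
  then have "peval qadd qzero qmul qone n p xs = qzero" for n p and xs :: "nat \<Rightarrow> ('a \<times> 'a) set"
    by (cases p) auto
  then show ?thesis
    unfolding fully_elementary_def symmetric_poly_def
    by (auto intro!: exI[of _ "[]"] simp: valid_pexpr_def)
qed

locale idem_linear_semiring =
  fixes X :: "'a::{comm_semiring_0, comm_monoid_mult} itself"
  assumes idem: "idempotent_sr X" and lin: "intrinsic_linear X"
begin

lemma add_idem [simp]: "(x::'a) + x = x"
  using idem by (simp add: idempotent_sr_def)

lemma add_left_absorb [simp]: "(x::'a) + (x + y) = x + y"
  by (simp flip: add.assoc)

lemma intrinsic_le_iff: "intrinsic_le (a::'a) b \<longleftrightarrow> a + b = b"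
  unfolding intrinsic_le_def by (metis add_left_absorb)

lemma intrinsic_less_iff: "intrinsic_less (a::'a) b \<longleftrightarrow> a + b = b \<and> a \<noteq> b"
  by (simp add: intrinsic_less_def intrinsic_le_iff)

lemma add_eq_either: "(a::'a) + b = a \<or> a + b = b"
  using lin by (auto simp: intrinsic_linear_def intrinsic_le_iff add.commute)

lemma add_eq_zeroD: "(a::'a) + b = 0 \<Longrightarrow> a = 0"
  by (metis add_left_absorb add_0_right)

sublocale intrinsic: linorder "intrinsic_le :: 'a \<Rightarrow> 'a \<Rightarrow> bool" intrinsic_less
proof
  fix x y z :: 'a
  show "intrinsic_less x y \<longleftrightarrow> intrinsic_le x y \<and> \<not> intrinsic_le y x"
    by (auto simp: intrinsic_less_iff intrinsic_le_iff add.commute)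
  show "intrinsic_le x x"
    by (simp add: intrinsic_le_iff)
  show "intrinsic_le x y \<Longrightarrow> intrinsic_le y z \<Longrightarrow> intrinsic_le x z"
    unfolding intrinsic_le_iff by (metis add.assoc)
  show "intrinsic_le x y \<Longrightarrow> intrinsic_le y x \<Longrightarrow> x = y"
    by (simp add: intrinsic_le_iff add.commute)
  show "intrinsic_le x y \<or> intrinsic_le y x"
    using lin by (simp add: intrinsic_linear_def)
qed

lemma add_eq_max: "(a::'a) + b = (if intrinsic_le a b then b else a)"
  using add_eq_either[of a b] by (auto simp: intrinsic_le_iff add.commute)

lemma sign_of_swap [simp]: "sign_of (prod.swap p) = sign_neg (sign_of (p::'a \<times> 'a))"
  using add_eq_either[of "fst p" "snd p"] by (cases p) (auto simp: sign_of_def add.commute)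

lemma sign_of_eq_Positive_iff: "sign_of p = Positive \<longleftrightarrow> intrinsic_less (snd p) (fst (p::'a \<times> 'a))"
  by (auto simp: sign_of_def intrinsic_less_iff add.commute)

lemma ssim_iff_mag_sign: "ssim p q \<longleftrightarrow> mag p = mag q \<and> sign_of p = sign_of (q::'a \<times> 'a)"
proof (cases p, cases q)
  fix a b c d :: 'a
  assume pq: "p = (a, b)" "q = (c, d)"
  show ?thesis
    unfolding pq ssim_def mag_def sign_of_def fst_conv snd_conv add_eq_max
    using intrinsic.linear[of a b] intrinsic.linear[of c d] intrinsic.linear[of a c]
      intrinsic.linear[of b d]
    by (auto split: if_splits dest: intrinsic.order.antisym intro: intrinsic.order.trans)
qed

lemma sign_of_sadd_dominant:
  assumes "intrinsic_less (mag q) (mag p)"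
  shows "sign_of (sadd p q) = sign_of (p::'a \<times> 'a)"
proof (cases p, cases q)
  fix a b c d :: 'a
  assume pq: "p = (a, b)" "q = (c, d)"
  show ?thesis
    using assms
    unfolding pq sadd_def mag_def sign_of_def fst_conv snd_conv add_eq_max
    using intrinsic.linear[of a b] intrinsic.linear[of c d] intrinsic.linear[of a c]
      intrinsic.linear[of b d]
    by (auto split: if_splits dest: intrinsic.order.antisym intro: intrinsic.order.trans)
qed

lemma sign_of_sadd_equal:
  assumes "mag p = mag (q::'a \<times> 'a)"
  shows "sign_of (sadd p q) = (if sign_of p = sign_of q then sign_of p else Balanced)"
proof (cases p, cases q)
  fix a b c d :: 'a
  assume pq: "p = (a, b)" "q = (c, d)"
  show ?thesis
    using assms
    unfolding pq sadd_def mag_def sign_of_def fst_conv snd_conv add_eq_max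
    using intrinsic.linear[of a b] intrinsic.linear[of c d] intrinsic.linear[of a c]
      intrinsic.linear[of b d]
    by (auto split: if_splits dest: intrinsic.order.antisym intro: intrinsic.order.trans)
qed

lemma sign_of_sadd:
  "sign_of (sadd p q) =
     (if mag p = mag q then (if sign_of p = sign_of q then sign_of p else Balanced)
      else if intrinsic_le (mag q) (mag p) then sign_of p else sign_of (q::'a \<times> 'a))"
  using sign_of_sadd_equal sign_of_sadd_dominant[of q p] sign_of_sadd_dominant[of p q]
    intrinsic.linear[of "mag p" "mag q"]
  by (auto simp: sadd_commute[of p] intrinsic.order.strict_iff_order)

lemma Scls_eq: "Scls (p::'a \<times> 'a) = {q. mag q = mag p \<and> sign_of q = sign_of p}"
  by (auto simp: Scls_def simrel_def ssim_iff_mag_sign)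

lemma Scls_eq_iff: "Scls p = Scls q \<longleftrightarrow> mag p = mag q \<and> sign_of p = sign_of (q::'a \<times> 'a)"
  by (auto simp: Scls_eq)

lemma Scls_some_mem: "Scls (SOME q. q \<in> Scls p) = Scls (p::'a \<times> 'a)"
proof -
  have "(SOME q. q \<in> Scls p) \<in> Scls p"
    by (rule someI[of _ p]) (simp add: Scls_eq)
  then show ?thesis
    by (simp add: Scls_eq_iff Scls_eq)
qed

lemma Scls_some: "A \<in> Stilde \<Longrightarrow> Scls (SOME p::'a \<times> 'a. p \<in> A) = A"
  by (auto elim: Stilde_cases simp: Scls_some_mem)

lemma qadd_Scls: "qadd (Scls p) (Scls q) = Scls (sadd p (q::'a \<times> 'a))"
  using Scls_some_mem[of p] Scls_some_mem[of q]
  unfolding qadd_def Scls_eq_iff by (simp add: sign_of_sadd)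

lemma valid_pexpr_Stilde_Scls:
  assumes "valid_pexpr (Stilde :: ('a \<times> 'a) set set) n r"
  shows "\<exists>r'. r = map (\<lambda>(c, d). (Scls c, d)) r'"
proof
  show "r = map (\<lambda>(c, d). (Scls c, d)) (map (\<lambda>(c, d). (SOME p :: 'a \<times> 'a. p \<in> c, d)) r)"
    unfolding map_map using assms
    by (intro map_idI[symmetric]) (auto simp: valid_pexpr_def Scls_some)
qed

definition bounded_positive :: "'a \<Rightarrow> 'a \<times> 'a \<Rightarrow> bool" where
  "bounded_positive m p \<longleftrightarrow> intrinsic_le (mag p) m \<and> (mag p = m \<longrightarrow> sign_of p = Positive)"

lemma bounded_positive_sadd:
  assumes "bounded_positive m (sadd p q)"
  shows "bounded_positive m p"
proof -
  have sum: "intrinsic_le (mag p + mag q) m"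
    using assms by (simp add: bounded_positive_def)
  have p: "intrinsic_le (mag p) (mag p + mag q)" and q: "intrinsic_le (mag q) (mag p + mag q)"
    by (simp_all add: intrinsic_le_iff add.left_commute)
  have "sign_of p = Positive" if "mag p = m"
  proof -
    have "intrinsic_le (mag q) (mag p)"
      using intrinsic.order.trans[OF q sum] that by simp
    then have "mag (sadd p q) = m"
      using that by (simp add: intrinsic_le_iff add.commute)
    then show ?thesis
      using assms \<open>intrinsic_le (mag q) (mag p)\<close>
      by (simp add: bounded_positive_def sign_of_sadd split: if_splits)
  qed
  then show ?thesis
    using intrinsic.order.trans[OF p sum] by (simp add: bounded_positive_def)
qed

lemma expresses_sum_squares_mag_sign:
  assumes "expresses_sum_squares (r :: ('a \<times> 'a) pexpr)"
  shows "mag (peval sadd szero smul sone 2 r (\<lambda>i. if i = 0 then sadd u v else smul u v))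
      = mag (sadd (smul u u) (smul v (v::'a \<times> 'a)))"
    and "sign_of (peval sadd szero smul sone 2 r (\<lambda>i. if i = 0 then sadd u v else smul u v))
      = sign_of (sadd (smul u u) (smul v v))"
  using assms[unfolded expresses_sum_squares_def, rule_format, of u v]
  by (simp_all add: Scls_eq_iff)

lemma expresses_sum_squares_witness:
  assumes one: "(1::'a) \<noteq> 0" and r: "expresses_sum_squares (r :: ('a \<times> 'a) pexpr)"
  obtains g d where "(g, d) \<in> set r" "mag g = 1" "d 1 = 0" "d 0 \<noteq> 0"
proof -
  let ?N = "(0, 1) :: 'a \<times> 'a" and ?Z = "(0, 0) :: 'a \<times> 'a"
  have "\<exists>(g, d) \<in> set r. mag (elem_monomial g d ?N ?Z) = 1"
    unfolding elem_monomial_def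
  proof (rule peval_summand_ex[where Q = "\<lambda>p. mag p = 1" and add = sadd and zero = szero])
    show "mag (sadd a b) = 1 \<Longrightarrow> mag a = 1 \<or> mag b = 1" for a b :: "'a \<times> 'a"
      using add_eq_either[of "mag a" "mag b"] by auto
    show "mag (szero :: 'a \<times> 'a) \<noteq> 1"
      using one by simp
    show "mag (peval sadd szero smul sone 2 r (\<lambda>i. if i = 0 then sadd ?N ?Z else smul ?N ?Z)) = 1"
      using expresses_sum_squares_mag_sign(1)[OF r, of ?N ?Z] by simp
  qed
  then obtain g d where gd: "(g, d) \<in> set r" and "mag (elem_monomial g d ?N ?Z) = 1"
    by blast
  then have "mag g * 0 ^ d 1 = 1"
    by (simp add: mag_elem_monomial)
  moreover have "d 1 = 0"
    using calculation one by (cases "d 1") auto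
  ultimately have "mag g = 1"
    by simp
  have "\<forall>(g, d) \<in> set r. mag (elem_monomial g d ?Z ?Z) = 0"
    unfolding elem_monomial_def
  proof (rule peval_summands_all[where Q = "\<lambda>p. mag p = 0" and add = sadd and zero = szero])
    show "mag (sadd a b) = 0 \<Longrightarrow> mag a = 0 \<and> mag b = 0" for a b :: "'a \<times> 'a"
      using add_eq_zeroD[of "mag a" "mag b"] add_eq_zeroD[of "mag b" "mag a"]
      by (simp add: add.commute)
    show "mag (peval sadd szero smul sone 2 r (\<lambda>i. if i = 0 then sadd ?Z ?Z else smul ?Z ?Z)) = 0"
      using expresses_sum_squares_mag_sign(1)[OF r, of ?Z ?Z] by simp
  qed
  then have "(0::'a) ^ d 0 = 0"
    using gd \<open>mag g = 1\<close> \<open>d 1 = 0\<close> by (fastforce simp: mag_elem_monomial)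
  then have "d 0 \<noteq> 0"
    using one by (metis power_0)
  then show thesis
    using that gd \<open>mag g = 1\<close> \<open>d 1 = 0\<close> by blast
qed

lemma expresses_sum_squares_bounded_positive:
  assumes one: "(1::'a) \<noteq> 0" and r: "expresses_sum_squares (r :: ('a \<times> 'a) pexpr)"
  shows "\<forall>(g, d) \<in> set r. bounded_positive 1 (elem_monomial g d (1, 0) (0, 1))"
  unfolding elem_monomial_def
proof (rule peval_summands_all[where Q = "bounded_positive 1" and add = sadd and zero = szero])
  let ?P = "(1, 0) :: 'a \<times> 'a" and ?N = "(0, 1) :: 'a \<times> 'a"
  show "bounded_positive 1 (sadd a b) \<Longrightarrow> bounded_positive 1 a \<and> bounded_positive 1 b"
    for a b :: "'a \<times> 'a"
    using bounded_positive_sadd[of 1 a b] bounded_positive_sadd[of 1 b a]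
    by (simp add: sadd_commute)
  have "sadd (smul ?P ?P) (smul ?N ?N) = ?P"
    by (simp add: sadd_def smul_def)
  moreover have "bounded_positive 1 ?P"
    using one by (simp add: bounded_positive_def sign_of_def intrinsic.order.refl)
  ultimately show "bounded_positive 1
      (peval sadd szero smul sone 2 r (\<lambda>i. if i = 0 then sadd ?P ?N else smul ?P ?N))"
    using expresses_sum_squares_mag_sign[OF r, of ?P ?N] by (simp add: bounded_positive_def)
qed

lemma not_expresses_sum_squares:
  assumes one: "(1::'a) \<noteq> 0"
  shows "\<not> expresses_sum_squares (r :: ('a \<times> 'a) pexpr)"
proof
  assume r: "expresses_sum_squares r"
  obtain g d where gd: "(g, d) \<in> set r" and "mag g = 1" "d 1 = 0" "d 0 \<noteq> 0"
    using expresses_sum_squares_witness[OF one r] .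
  have "bounded_positive 1 (elem_monomial g d (1, 0) (0, 1))"
    using expresses_sum_squares_bounded_positive[OF one r] gd by blast
  moreover have "mag (elem_monomial g d (1, 0) (0, 1)) = 1"
    using \<open>mag g = 1\<close> \<open>d 1 = 0\<close> by (simp add: mag_elem_monomial sadd_def smul_def)
  ultimately show False
    using sign_of_elem_monomial_Balanced[where g = g and d = d, OF \<open>d 0 \<noteq> 0\<close>]
    by (simp add: bounded_positive_def)
qed

end

locale idem_linear_semiring_strict = idem_linear_semiring X
  for X :: "'a::{comm_semiring_0, comm_monoid_mult} itself" +
  assumes mult_strict: "\<forall>a b x::'a. intrinsic_less a b \<longrightarrow> a * x = 0 \<or> intrinsic_less (a * x) (b * x)"
begin

lemma sign_of_smul_Positive:
  assumes "sign_of p = Positive" and "sign_of (q::'a \<times> 'a) = Positive"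
  shows "sign_of (smul p q) = (if mag p * mag q = 0 then Balanced else Positive)"
proof (cases p, cases q)
  fix a b c d :: 'a
  assume pq: "p = (a, b)" "q = (c, d)"
  have "intrinsic_less b a" "intrinsic_less d c"
    using assms unfolding pq sign_of_eq_Positive_iff by simp_all
  then have mag: "mag p * mag q = a * c"
    unfolding pq by (simp add: intrinsic_less_iff add.commute)
  have bc: "b * c = 0 \<or> intrinsic_less (b * c) (a * c)"
    and ad: "a * d = 0 \<or> intrinsic_less (a * d) (a * c)"
    using mult_strict \<open>intrinsic_less b a\<close> \<open>intrinsic_less d c\<close> by (metis mult.commute)+
  have bd: "intrinsic_le (b * d) (a * c)"
  proof (rule intrinsic.order.trans)
    show "intrinsic_le (b * d) (a * d)"
      using \<open>intrinsic_less b a\<close> by (simp add: intrinsic_le_mult_right intrinsic.less_imp_le)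
    show "intrinsic_le (a * d) (a * c)"
      using \<open>intrinsic_less d c\<close> intrinsic_le_mult_right[of d c a]
      by (simp add: intrinsic.less_imp_le mult.commute)
  qed
  show ?thesis
  proof (cases "a * c = 0")
    case True
    then have "b * c = 0" "a * d = 0" "b * d = 0"
      using bc ad bd by (auto simp: intrinsic_less_def intrinsic_le_iff)
    then show ?thesis
      using True mag unfolding pq by (simp add: smul_def sign_of_def)
  next
    case False
    have "intrinsic_less 0 (a * c)"
      using False by (simp add: intrinsic_less_iff)
    then have "intrinsic_less (a * d + b * c) (a * c)"
      using add_eq_either[of "a * d" "b * c"] bc ad by (auto simp: add.commute)
    moreover have "a * c + b * d = a * c"
      using bd by (simp add: intrinsic_le_iff add.commute)
    ultimately show ?thesis
      using False mag unfolding pq by (simp add: smul_def sign_of_eq_Positive_iff)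
  qed
qed

lemma sign_of_smul:
  "sign_of (smul p q)
     = (if mag p * mag q = 0 then Balanced else sign_mult (sign_of p) (sign_of (q::'a \<times> 'a)))"
proof -
  have Positive_left: "sign_of (smul p q) = (if mag p * mag q = 0 then Balanced else sign_of q)"
    if p: "sign_of p = Positive" for p q :: "'a \<times> 'a"
  proof (cases "sign_of q")
    case Positive
    then show ?thesis
      using sign_of_smul_Positive[OF p] by simp
  next
    case Negative
    then have "sign_of (prod.swap q) = Positive"
      by simp
    from sign_of_smul_Positive[OF p this] show ?thesis
      using Negative by (simp add: smul_swap_right split: if_splits)
  next
    case Balanced
    then show ?thesis
      by (simp add: sign_of_balanced_smul)
  qed
  show ?thesis
  proof (cases "sign_of p")
    case Positive
    then show ?thesis
      using Positive_left[of p q] by (cases "sign_of q") simp_all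
  next
    case Negative
    then have "sign_of (prod.swap p) = Positive"
      by simp
    from Positive_left[OF this, of q] show ?thesis
      using Negative by (cases "sign_of q") (simp_all add: smul_swap_left split: if_splits)
  next
    case Balanced
    then show ?thesis
      by (simp add: smul_commute[of p] sign_of_balanced_smul)
  qed
qed

lemma qmul_Scls: "qmul (Scls p) (Scls q) = Scls (smul p (q::'a \<times> 'a))"
  using Scls_some_mem[of p] Scls_some_mem[of q]
  unfolding qmul_def Scls_eq_iff by (simp add: sign_of_smul)

lemma gpow_Scls: "gpow qmul qone (Scls p) n = Scls (gpow smul sone (p::'a \<times> 'a) n)"
  by (induction n) (simp_all add: qone_def qmul_Scls)

lemma peval_Scls:
  "peval qadd qzero qmul qone n (map (\<lambda>(c, d). (Scls c, d)) p) (Scls \<circ> xs)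
     = Scls (peval sadd szero smul sone n p (xs :: nat \<Rightarrow> 'a \<times> 'a))"
  by (rule peval_hom[symmetric]) (simp_all add: qadd_Scls qmul_Scls qzero_def qone_def)

lemma not_frobenius:
  assumes "(1::'a) \<noteq> 0"
  shows "\<not> frobenius (Stilde :: ('a \<times> 'a) set set) qadd qmul qone"
proof
  let ?P = "(1, 0) :: 'a \<times> 'a" and ?N = "(0, 1) :: 'a \<times> 'a"
  assume "frobenius (Stilde :: ('a \<times> 'a) set set) qadd qmul qone"
  then have "gpow qmul qone (qadd (Scls ?P) (Scls ?N)) 2
      = qadd (gpow qmul qone (Scls ?P) 2) (gpow qmul qone (Scls ?N) 2)"
    unfolding frobenius_def by (simp add: Scls_in_Stilde)
  then have "Scls (gpow smul sone (sadd ?P ?N) 2)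
      = Scls (sadd (gpow smul sone ?P 2) (gpow smul sone ?N 2))"
    by (simp add: qadd_Scls gpow_Scls)
  then have "Scls ((1, 1) :: 'a \<times> 'a) = Scls ?P"
    by (simp add: numeral_2_eq_2 sadd_def smul_def sone_def)
  then show False
    using assms by (simp add: Scls_eq_iff sign_of_def)
qed

lemma peval_power_sum_Scls:
  "peval qadd qzero qmul qone n (power_sum_pexpr qone n m) (Scls \<circ> w)
     = Scls (peval sadd szero smul sone n (power_sum_pexpr sone n m) (w :: nat \<Rightarrow> 'a \<times> 'a))"
  using peval_Scls[of n "power_sum_pexpr sone n m" w] by (simp add: map_coeff_power_sum_pexpr qone_def)

lemma peval_elem_pexpr_Scls:
  "peval qadd qzero qmul qone n (elem_pexpr qone n j) (Scls \<circ> w)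
     = Scls (peval sadd szero smul sone n (elem_pexpr sone n j) (w :: nat \<Rightarrow> 'a \<times> 'a))"
  using peval_Scls[of n "elem_pexpr sone n j" w] by (simp add: map_coeff_elem_pexpr qone_def)

lemma fully_elementary_expresses_sum_squares:
  assumes "fully_elementary (Stilde :: ('a \<times> 'a) set set) qadd qzero qmul qone"
  shows "\<exists>r :: ('a \<times> 'a) pexpr. expresses_sum_squares r"
proof -
  have "symmetric_poly (Stilde :: ('a \<times> 'a) set set) qadd qzero qmul qone 2
      (peval qadd qzero qmul qone 2 (power_sum_pexpr qone 2 2))"
    unfolding symmetric_poly_def qone_def
    by (blast intro: symmetric_power_sum_pexpr Scls_in_Stilde)
  then obtain r where r: "valid_pexpr (Stilde :: ('a \<times> 'a) set set) 2 r"
    and elementary: "\<forall>xs. (\<forall>i<2. xs i \<in> Stilde) \<longrightarrow>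
      peval qadd qzero qmul qone 2 (power_sum_pexpr qone 2 2) xs
        = peval qadd qzero qmul qone 2 r
            (\<lambda>i. peval qadd qzero qmul qone 2 (elem_pexpr qone 2 (Suc i)) xs)"
    using assms unfolding fully_elementary_def by blast
  obtain r' where r_r': "r = map (\<lambda>(c, d). (Scls c, d)) r'"
    using valid_pexpr_Stilde_Scls[OF r] by blast
  have "Scls (sadd (smul u u) (smul v v))
      = Scls (peval sadd szero smul sone 2 r' (\<lambda>i. if i = 0 then sadd u v else smul u v))"
    for u v :: "'a \<times> 'a"
  proof -
    define w where "w i = (if i = 0 then u else v)" for i :: nat
    define e where "e i = peval sadd szero smul sone 2 (elem_pexpr sone 2 (Suc i)) w" for i
    have e: "(\<lambda>i. peval qadd qzero qmul qone 2 (elem_pexpr qone 2 (Suc i)) (Scls \<circ> w)) = Scls \<circ> e"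
      by (simp add: fun_eq_iff peval_elem_pexpr_Scls e_def)
    have "Scls (sadd (smul u u) (smul v v))
        = peval qadd qzero qmul qone 2 (power_sum_pexpr qone 2 2) (Scls \<circ> w)"
      by (simp add: peval_power_sum_Scls peval_power_sum_two w_def)
    also have "\<dots> = peval qadd qzero qmul qone 2 r (Scls \<circ> e)"
      using elementary[rule_format, of "Scls \<circ> w"] by (simp add: Scls_in_Stilde e)
    also have "\<dots> = Scls (peval sadd szero smul sone 2 r' e)"
      by (simp add: r_r' peval_Scls)
    also have "\<dots> = Scls (peval sadd szero smul sone 2 r' (\<lambda>i. if i = 0 then sadd u v else smul u v))"
      by (rule arg_cong[where f = Scls], rule peval_cong)
        (auto simp: e_def w_def peval_elem_pexpr_two less_2_cases_iff)
    finally show ?thesis .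
  qed
  then show ?thesis
    unfolding expresses_sum_squares_def by blast
qed

end

theorem proposition6p4:
  fixes X :: "'a::{comm_semiring_0, comm_monoid_mult} itself"
  assumes idem: "idempotent_sr X"
    and lin: "intrinsic_linear X"
    and mono: "\<forall>a b x::'a. intrinsic_less a b \<longrightarrow> a * x = 0 \<or> intrinsic_less (a * x) (b * x)"
  shows "(fully_elementary (Stilde :: ('a \<times> 'a) set set) qadd qzero qmul qone
            \<longleftrightarrow> frobenius (Stilde :: ('a \<times> 'a) set set) qadd qmul qone)
       \<and> (frobenius (Stilde :: ('a \<times> 'a) set set) qadd qmul qone
            \<longleftrightarrow> (UNIV :: 'a set) = {0})"
proof (cases "(UNIV :: 'a set) = {0}")
  case True
  then show ?thesis
    using frobenius_trivial fully_elementary_trivial by blast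
next
  case False
  interpret idem_linear_semiring_strict X
    using assms by unfold_locales
  have "(1::'a) \<noteq> 0"
    using False by (metis UNIV_eq_I mult_1_right mult_zero_right singleton_iff)
  then show ?thesis
    using False not_frobenius fully_elementary_expresses_sum_squares not_expresses_sum_squares
    by blast
qed

end
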